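(* Let $\mathbb X$ be a Euclidean space, $g\colon\mathbb X\to\mathbb R^m$ twice continuously differentiable, $D\subset\mathbb R^m$ closed and locally polyhedral around $g(\bar x)$, $\Phi(x):=g(x)-D$, $(\bar x,0)\in\operatorname{gph}\Phi$, $u\in\mathbb S_{\mathbb X}$. Assume SOSCMS$(u)$: for all $y^*$, [$\nabla g(\bar x)^*y^*=0$, $\nabla^2\langle y^*,g\rangle(\bar x)[u,u]\ge0$, $y^*\in\mathcal N_D(g(\bar x);\nabla g(\bar x)u)$] implies $y^*=0$. Then: (a) for each $s\in\mathbb X$ and all $y^*,z^*$, [$\nabla g(\bar x)^*y^*=0$, $\nabla^2\langle y^*,g\rangle(\bar x)(u)+\nabla g(\bar x)^*z^*=0$, $y^*\in\mathcal N_{\mathbf T(u)}(w_s(u,0))$, and $z^*\in\mathcal N_{\mathbf T(u)}(w_s(u,0))$ or $z^*\in\mathcal T_{\mathcal N_{\mathbf T(u)}(w_s(u,0))}(y^* )$] implies $y^*=0$; and (b) for each $x^*,s\in\mathbb X$, $y^*,z^*\in\mathbb R^m$ and $\alpha\ge0$ with $v:=\alpha y^*$ satisfying $x^*=\nabla^2\langle y^*,g\rangle(\bar x)(u)+\nabla g(\bar x)^*z^*$, $y^*\in\mathcal N_{\mathbf T(u)}(w_s(u,v))\cap\ker\nabla g(\bar x)^*$, and $z^*\in\mathcal N_{\mathbf T(u)}(w_s(u,v))$ or $z^*\in\mathcal T_{\mathcal N_{\mathbf T(u)}(w_s(u,v))}(y^* )$, there is $\lambda\in\mathcal N_D(g(\bar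 x))$ with $x^*=\nabla g(\bar x)^*\lambda$.
   Context: $\mathbf T(u):=\mathcal T_{\mathcal T_D(g(\bar x))}(\nabla g(\bar x)u)$, $w_s(u,v):=\nabla g(\bar x)s+\tfrac12\nabla^2g(\bar x)[u,u]-v$, with $\nabla^2g(\bar x)[u,u]=(\langle u,\nabla^2g_i(\bar x)u\rangle)_{i=1}^m$; $\nabla^2\langle y^*,g\rangle(\bar x)(u)$ is the Hessian of $x\mapsto\langle y^*,g(x)\rangle$ applied to $u$ and $\nabla^2\langle y^*,g\rangle(\bar x)[u,u]$ the associated quadratic form. $\mathcal T$, $\mathcal N$ tangent and limiting normal cones; $\mathcal N_D(y;w)$ directional limiting normal cone (all $\eta$ with $w_k\to w$, $t_k\downarrow0$, $\eta_k\to\eta$, $\eta_k\in\widehat{\mathcal N}_D(y+t_kw_k)$). Locally polyhedral: intersection with a box around $g(\bar x)$ is a finite union of convex polyhedra. *)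

theory Defs
  imports "HOL-Analysis.Analysis"
begin

definition tangent_cone :: "'a::real_normed_vector set \<Rightarrow> 'a \<Rightarrow> 'a set" where
  "tangent_cone C x = {w. \<exists>t ws. (\<forall>k. t k > (0::real)) \<and> t \<longlonglongrightarrow> 0 \<and> ws \<longlonglongrightarrow> w
      \<and> (\<forall>k. x + t k *\<^sub>R ws k \<in> C)}"

definition regular_normal_cone :: "'a::real_inner set \<Rightarrow> 'a \<Rightarrow> 'a set" where
  "regular_normal_cone C x = (if x \<in> C then
     {\<eta>. \<forall>\<epsilon>>0. \<exists>\<delta>>0. \<forall>y\<in>C. norm (y - x) < \<delta> \<longrightarrow> \<eta> \<bullet> (y - x) \<le> \<epsilon> * norm (y - x)}
   else {})"

definition limiting_normal_cone :: "'a::real_inner set \<Rightarrow> 'a \<Rightarrow> 'a set" where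
  "limiting_normal_cone C x = {\<eta>. \<exists>xs es. (\<forall>k. xs k \<in> C) \<and> xs \<longlonglongrightarrow> x \<and> es \<longlonglongrightarrow> \<eta>
      \<and> (\<forall>k. es k \<in> regular_normal_cone C (xs k))}"

definition dir_limiting_normal_cone :: "'a::real_inner set \<Rightarrow> 'a \<Rightarrow> 'a \<Rightarrow> 'a set" where
  "dir_limiting_normal_cone C x w = {\<eta>. \<exists>t ws es. (\<forall>k. t k > (0::real)) \<and> t \<longlonglongrightarrow> 0
      \<and> ws \<longlonglongrightarrow> w \<and> es \<longlonglongrightarrow> \<eta> \<and> (\<forall>k. es k \<in> regular_normal_cone C (x + t k *\<^sub>R ws k))}"

definition locally_polyhedral :: "'a::euclidean_space set \<Rightarrow> 'a \<Rightarrow> bool" where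
  "locally_polyhedral D y \<longleftrightarrow> (\<exists>a b P. y \<in> box a b \<and> finite P \<and> (\<forall>p\<in>P. polyhedron p)
      \<and> D \<inter> cbox a b = \<Union>P)"

text \<open>Given the second derivative D2 (D2 u h = second derivative of g in directions u,h),
  the Hessian of x \<mapsto> <y,g x> applied to u: the vector v with v \<bullet> h = y \<bullet> D2 u h.\<close>
definition lag_hess_apply :: "('a::real_inner \<Rightarrow> 'a \<Rightarrow> 'b::real_inner) \<Rightarrow> 'b \<Rightarrow> 'a \<Rightarrow> 'a" where
  "lag_hess_apply D2 y u = adjoint (D2 u) y"

definition lag_hess_form :: "('a::real_inner \<Rightarrow> 'a \<Rightarrow> 'b::real_inner) \<Rightarrow> 'b \<Rightarrow> 'a \<Rightarrow> real" where
  "lag_hess_form D2 y u = y \<bullet> D2 u u"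

definition w_s :: "('a \<Rightarrow> 'b::real_vector) \<Rightarrow> ('a \<Rightarrow> 'a \<Rightarrow> 'b) \<Rightarrow> 'a \<Rightarrow> 'a \<Rightarrow> 'b \<Rightarrow> 'b" where
  "w_s Dg D2 s u v = Dg s + (1/2) *\<^sub>R D2 u u - v"

end

theory Submission
  imports Defs
begin

text \<open>Near \<open>g xbar\<close> the locally polyhedral set \<open>D\<close> coincides with \<open>g xbar + K\<close> for a cone
  \<open>K\<close> that is a finite union of polyhedra, and \<open>K\<close> in turn coincides near \<open>v = Dg xbar u\<close>
  with \<open>v + K'\<close>. Hence the tangent cone of \<open>D\<close> is \<open>K\<close>, the iterated tangent cone \<open>T(u)\<close>
  is \<open>K'\<close>, and a regular normal to \<open>K'\<close> at \<open>p\<close> is a regular normal to \<open>D\<close> at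
  \<open>g xbar + t (v + \<tau> p)\<close> for all small \<open>t, \<tau> > 0\<close>: every limiting normal to \<open>T(u)\<close> is a
  directional limiting normal to \<open>D\<close> in direction \<open>v\<close>.

  Limiting normals to a cone are orthogonal to the base point. For \<open>y\<close> in the kernel of
  the adjoint of \<open>Dg xbar\<close> and normal to \<open>T(u)\<close> at \<open>w_s(u, \<alpha> y)\<close> this gives
  \<open>y \<bullet> D2g xbar u u = 2 \<alpha> |y|\<^sup>2 \<ge> 0\<close>, so SOSCMS forces \<open>y = 0\<close>. This is (a), and in (b)
  it leaves \<open>x* = Dg xbar\<^sup>* z\<close> with \<open>z\<close> a normal to \<open>T(u)\<close> or a tangent to such normals at
  \<open>0\<close>; both lie in the closed cone of limiting normals to \<open>D\<close> at \<open>g xbar\<close>.\<close>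

lemma vanishing_scales:
  fixes x :: "nat \<Rightarrow> 'a::real_normed_vector"
  assumes "r > 0"
  obtains \<tau> :: "nat \<Rightarrow> real"
  where "\<And>k. \<tau> k > 0" "\<And>k. \<tau> k * norm (x k) < r" "\<tau> \<longlonglongrightarrow> 0" "(\<lambda>k. \<tau> k *\<^sub>R x k) \<longlonglongrightarrow> 0"
proof
  define \<tau> where "\<tau> k = r / (real k + 2) / (norm (x k) + 1)" for k
  have np: "norm (x k) + 1 > 0" for k using norm_ge_zero[of "x k"] by linarith
  show pos: "\<tau> k > 0" for k using \<open>r > 0\<close> np[of k] by (simp add: \<tau>_def)
  have scaled: "\<tau> k * (norm (x k) + 1) = r / (real k + 2)" for k
    using np[of k] by (simp add: \<tau>_def)
  have bounds: "\<tau> k \<le> r / (real k + 2)" "\<tau> k * norm (x k) \<le> r / (real k + 2)" for k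
    using pos[of k] norm_ge_zero[of "x k"] unfolding scaled[of k, symmetric]
    by (simp_all add: distrib_left)
  have lim: "(\<lambda>k. r / (real k + 2)) \<longlonglongrightarrow> 0"
    using LIMSEQ_Suc[OF LIMSEQ_Suc[OF lim_const_over_n[of r]]] by (simp add: add.commute)
  have "r / (real k + 2) < r / 1" for k
    by (rule divide_strict_left_mono) (use \<open>r > 0\<close> in auto)
  then show "\<tau> k * norm (x k) < r" for k
    using bounds(2)[of k] by (metis div_by_1 order.strict_trans1)
  show "\<tau> \<longlonglongrightarrow> 0"
    by (rule Lim_null_comparison[OF _ lim]) (use bounds(1) pos in \<open>simp add: less_imp_le\<close>)
  show "(\<lambda>k. \<tau> k *\<^sub>R x k) \<longlonglongrightarrow> 0"
    by (rule Lim_null_comparison[OF _ lim]) (use bounds(2) pos in \<open>simp add: less_imp_le\<close>)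
qed

lemma cone_scaleR_cancel:
  assumes "cone K" and "t > 0" and "t *\<^sub>R x \<in> K"
  shows "x \<in> K"
proof -
  have "inverse t *\<^sub>R (t *\<^sub>R x) \<in> K"
    using assms unfolding cone_def by (simp del: scaleR_scaleR)
  then show ?thesis using \<open>t > 0\<close> by simp
qed

section \<open>Regular and limiting normal cones\<close>

lemma regular_normal_cone_imp_mem: "\<eta> \<in> regular_normal_cone S p \<Longrightarrow> p \<in> S"
  by (simp add: regular_normal_cone_def split: if_splits)

lemma regular_normal_cone_iff:
  "\<eta> \<in> regular_normal_cone S p \<longleftrightarrow> p \<in> S \<and>
     (\<forall>\<epsilon>>0. \<exists>\<delta>>0. \<forall>y\<in>S. norm (y - p) < \<delta> \<longrightarrow> \<eta> \<bullet> (y - p) \<le> \<epsilon> * norm (y - p))"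
  by (simp add: regular_normal_cone_def)

lemma regular_normal_cone_local:
  assumes "\<forall>\<^sub>F x in nhds p. x \<in> S \<longleftrightarrow> x \<in> S'" and "\<eta> \<in> regular_normal_cone S p"
  shows "\<eta> \<in> regular_normal_cone S' p"
proof -
  obtain r where r: "r > 0" and near: "\<And>x. dist x p < r \<Longrightarrow> x \<in> S \<longleftrightarrow> x \<in> S'"
    using assms(1) unfolding eventually_nhds_metric by blast
  have "p \<in> S'" using near[of p] r regular_normal_cone_imp_mem[OF assms(2)] by simp
  moreover have "\<exists>\<delta>>0. \<forall>y\<in>S'. norm (y - p) < \<delta> \<longrightarrow> \<eta> \<bullet> (y - p) \<le> \<epsilon> * norm (y - p)"
    if "\<epsilon> > 0" for \<epsilon>
  proof -
    obtain \<delta> where "\<delta> > 0" and \<delta>: "\<forall>y\<in>S. norm (y - p) < \<delta> \<longrightarrow> \<eta> \<bullet> (y - p) \<le> \<epsilon> * norm (y - p)"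
      using assms(2) \<open>\<epsilon> > 0\<close> by (auto simp: regular_normal_cone_iff)
    then show ?thesis
      using r near by (intro exI[of _ "min \<delta> r"]) (auto simp: dist_norm)
  qed
  ultimately show ?thesis by (simp add: regular_normal_cone_iff)
qed

lemma regular_normal_cone_translation:
  assumes "\<eta> \<in> regular_normal_cone K p"
  shows "\<eta> \<in> regular_normal_cone {x. x - c \<in> K} (c + p)"
proof -
  have shift: "y - (c + p) = (y - c) - p" for y by (simp add: algebra_simps)
  show ?thesis
    using assms unfolding regular_normal_cone_iff shift by simp blast
qed

lemma regular_normal_cone_scaleR_point:
  assumes "cone K" and "t > 0" and "\<eta> \<in> regular_normal_cone K p"
  shows "\<eta> \<in> regular_normal_cone K (t *\<^sub>R p)"
proof -
  have p: "p \<in> K" using assms(3) by (rule regular_normal_cone_imp_mem)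
  have "\<exists>\<delta>>0. \<forall>y\<in>K. norm (y - t *\<^sub>R p) < \<delta> \<longrightarrow> \<eta> \<bullet> (y - t *\<^sub>R p) \<le> \<epsilon> * norm (y - t *\<^sub>R p)"
    if "\<epsilon> > 0" for \<epsilon>
  proof -
    obtain \<delta> where "\<delta> > 0" and \<delta>: "\<forall>y\<in>K. norm (y - p) < \<delta> \<longrightarrow> \<eta> \<bullet> (y - p) \<le> \<epsilon> * norm (y - p)"
      using assms(3) \<open>\<epsilon> > 0\<close> by (auto simp: regular_normal_cone_iff)
    show ?thesis
    proof (intro exI[of _ "t * \<delta>"] conjI ballI impI)
      fix y assume "y \<in> K" and close: "norm (y - t *\<^sub>R p) < t * \<delta>"
      have y_scaled: "y /\<^sub>R t \<in> K"
        using cone_scaleR_cancel[OF \<open>cone K\<close> \<open>t > 0\<close>] \<open>y \<in> K\<close> \<open>t > 0\<close> by simp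
      have eq: "y - t *\<^sub>R p = t *\<^sub>R (y /\<^sub>R t - p)" using \<open>t > 0\<close> by (simp add: algebra_simps)
      have "norm (y /\<^sub>R t - p) < \<delta>" using close \<open>t > 0\<close> unfolding eq by simp
      then have "\<eta> \<bullet> (y /\<^sub>R t - p) \<le> \<epsilon> * norm (y /\<^sub>R t - p)" using \<delta> y_scaled by blast
      then show "\<eta> \<bullet> (y - t *\<^sub>R p) \<le> \<epsilon> * norm (y - t *\<^sub>R p)"
        using \<open>t > 0\<close> unfolding eq by (simp add: mult.left_commute)
    qed (use \<open>t > 0\<close> \<open>\<delta> > 0\<close> in simp)
  qed
  moreover have "t *\<^sub>R p \<in> K" using assms(1,2) p by (simp add: cone_def)
  ultimately show ?thesis by (simp add: regular_normal_cone_iff)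
qed

lemma cone_regular_normal_cone: "cone (regular_normal_cone S p)"
  unfolding cone_def
proof (intro ballI allI impI)
  fix \<eta> and c :: real
  assume \<eta>: "\<eta> \<in> regular_normal_cone S p" and "c \<ge> 0"
  have "\<exists>\<delta>>0. \<forall>y\<in>S. norm (y - p) < \<delta> \<longrightarrow> c * (\<eta> \<bullet> (y - p)) \<le> \<epsilon> * norm (y - p)"
    if "\<epsilon> > 0" for \<epsilon>
  proof -
    have "\<epsilon> / (c + 1) > 0" using \<open>\<epsilon> > 0\<close> \<open>c \<ge> 0\<close> by simp
    then obtain \<delta> where "\<delta> > 0"
      and \<delta>: "\<forall>y\<in>S. norm (y - p) < \<delta> \<longrightarrow> \<eta> \<bullet> (y - p) \<le> \<epsilon> / (c + 1) * norm (y - p)"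
      using \<eta> unfolding regular_normal_cone_iff by blast
    have "c * (\<eta> \<bullet> (y - p)) \<le> \<epsilon> * norm (y - p)" if "y \<in> S" "norm (y - p) < \<delta>" for y
    proof -
      have "\<eta> \<bullet> (y - p) \<le> \<epsilon> / (c + 1) * norm (y - p)" using \<delta> that by blast
      then have "c * (\<eta> \<bullet> (y - p)) \<le> c * (\<epsilon> / (c + 1) * norm (y - p))"
        using \<open>c \<ge> 0\<close> by (rule mult_left_mono)
      also have "\<dots> \<le> \<epsilon> * norm (y - p)"
        using \<open>c \<ge> 0\<close> \<open>\<epsilon> > 0\<close> by (simp add: field_simps mult_right_mono)
      finally show ?thesis .
    qed
    then show ?thesis using \<open>\<delta> > 0\<close> by blast
  qed
  then show "c *\<^sub>R \<eta> \<in> regular_normal_cone S p"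
    using regular_normal_cone_imp_mem[OF \<eta>] by (simp add: regular_normal_cone_iff)
qed

lemma regular_normal_cone_feasible_direction:
  assumes "\<eta> \<in> regular_normal_cone S p" and feasible: "\<And>s. 0 < s \<Longrightarrow> s \<le> 1 \<Longrightarrow> p + s *\<^sub>R h \<in> S"
  shows "\<eta> \<bullet> h \<le> 0"
proof (rule tendsto_lowerbound)
  show "((\<lambda>\<epsilon>. \<epsilon> * norm h) \<longlongrightarrow> 0) (at_right 0)"
    by (auto intro!: tendsto_eq_intros)
  have bound: "\<eta> \<bullet> h \<le> \<epsilon> * norm h" if "\<epsilon> > 0" for \<epsilon>
  proof -
    obtain \<delta> where "\<delta> > 0" and \<delta>: "\<forall>y\<in>S. norm (y - p) < \<delta> \<longrightarrow> \<eta> \<bullet> (y - p) \<le> \<epsilon> * norm (y - p)"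
      using assms(1) \<open>\<epsilon> > 0\<close> by (auto simp: regular_normal_cone_iff)
    obtain \<tau> :: "nat \<Rightarrow> real" where "\<tau> 0 > 0" "\<tau> 0 * norm h < \<delta>"
      using vanishing_scales[OF \<open>\<delta> > 0\<close>, of "\<lambda>k. h"] by metis
    define s where "s = min 1 (\<tau> 0)"
    have "s > 0" "s \<le> 1" using \<open>\<tau> 0 > 0\<close> by (simp_all add: s_def)
    have "s * norm h \<le> \<tau> 0 * norm h" by (rule mult_right_mono) (simp_all add: s_def)
    with \<open>\<tau> 0 * norm h < \<delta>\<close> have "s * norm h < \<delta>" by linarith
    then have "norm ((p + s *\<^sub>R h) - p) < \<delta>" using \<open>s > 0\<close> by simp
    then have "\<eta> \<bullet> ((p + s *\<^sub>R h) - p) \<le> \<epsilon> * norm ((p + s *\<^sub>R h) - p)"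
      using \<delta> feasible[OF \<open>s > 0\<close> \<open>s \<le> 1\<close>] by blast
    then show ?thesis using \<open>s > 0\<close> by (simp add: mult.left_commute)
  qed
  show "\<forall>\<^sub>F \<epsilon> in at_right 0. \<eta> \<bullet> h \<le> \<epsilon> * norm h"
    using eventually_at_right_less[of "0::real"] by (rule eventually_mono) (rule bound)
qed simp

lemma regular_normal_cone_cone_orthogonal:
  assumes "cone K" and "\<eta> \<in> regular_normal_cone K p"
  shows "\<eta> \<bullet> p = 0"
proof -
  have "p \<in> K" using assms(2) by (rule regular_normal_cone_imp_mem)
  have "(1 + s) *\<^sub>R p \<in> K" "(1 - s) *\<^sub>R p \<in> K" if "0 < s" "s \<le> 1" for s
    using \<open>cone K\<close> \<open>p \<in> K\<close> that by (simp_all add: cone_def)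
  then have "\<eta> \<bullet> p \<le> 0" and "\<eta> \<bullet> (- p) \<le> 0"
    by (intro regular_normal_cone_feasible_direction[OF assms(2)]; simp add: algebra_simps)+
  then show ?thesis by simp
qed

lemma limiting_normal_cone_cone_orthogonal:
  assumes "cone K" and "\<eta> \<in> limiting_normal_cone K w"
  shows "\<eta> \<bullet> w = 0"
proof -
  obtain xs es where "xs \<longlonglongrightarrow> w" "es \<longlonglongrightarrow> \<eta>" and "\<forall>k. es k \<in> regular_normal_cone K (xs k)"
    using assms(2) unfolding limiting_normal_cone_def by blast
  then have "(\<lambda>k. es k \<bullet> xs k) \<longlonglongrightarrow> \<eta> \<bullet> w" by (intro tendsto_inner)
  moreover have "es k \<bullet> xs k = 0" for k
    using regular_normal_cone_cone_orthogonal[OF assms(1)] \<open>\<forall>k. es k \<in> _\<close> by blast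
  ultimately show ?thesis by (simp add: LIMSEQ_const_iff)
qed

lemma cone_limiting_normal_cone: "cone (limiting_normal_cone S x)"
  unfolding cone_def
proof (intro ballI allI impI)
  fix \<eta> and c :: real
  assume "\<eta> \<in> limiting_normal_cone S x" and "c \<ge> 0"
  then obtain xs es where "\<forall>k. xs k \<in> S" "xs \<longlonglongrightarrow> x" "es \<longlonglongrightarrow> \<eta>"
    and "\<forall>k. es k \<in> regular_normal_cone S (xs k)"
    unfolding limiting_normal_cone_def by blast
  moreover have "\<forall>k. c *\<^sub>R es k \<in> regular_normal_cone S (xs k)"
    using calculation(4) cone_regular_normal_cone[unfolded cone_def] \<open>c \<ge> 0\<close> by blast
  ultimately show "c *\<^sub>R \<eta> \<in> limiting_normal_cone S x"
    unfolding limiting_normal_cone_def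
    by (intro CollectI exI[of _ xs] exI[of _ "\<lambda>k. c *\<^sub>R es k"]) (auto intro: tendsto_scaleR)
qed

lemma limiting_normal_cone_approx:
  assumes "\<eta> \<in> limiting_normal_cone S x" and "\<epsilon> > 0"
  obtains p e where "p \<in> S" "e \<in> regular_normal_cone S p" "dist p x < \<epsilon>" "dist e \<eta> < \<epsilon>"
proof -
  obtain xs es where "\<forall>k. xs k \<in> S" "xs \<longlonglongrightarrow> x" "es \<longlonglongrightarrow> \<eta>"
    and "\<forall>k. es k \<in> regular_normal_cone S (xs k)"
    using assms(1) unfolding limiting_normal_cone_def by blast
  moreover have "\<forall>\<^sub>F k in sequentially. dist (xs k) x < \<epsilon> \<and> dist (es k) \<eta> < \<epsilon>"
    using calculation(2,3) \<open>\<epsilon> > 0\<close> by (intro eventually_conj tendstoD)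
  ultimately show ?thesis using that eventually_happens'[OF sequentially_bot] by blast
qed

lemma closed_limiting_normal_cone: "closed (limiting_normal_cone S x)"
  unfolding closed_sequential_limits
proof (intro allI impI, elim conjE)
  fix E l assume E: "\<forall>n. E n \<in> limiting_normal_cone S x" and "E \<longlonglongrightarrow> l"
  have "\<forall>n. \<exists>p e. p \<in> S \<and> e \<in> regular_normal_cone S p
      \<and> dist p x < 1 / real (Suc n) \<and> dist e (E n) < 1 / real (Suc n)"
  proof
    fix n
    have "1 / real (Suc n) > 0" by simp
    from limiting_normal_cone_approx[OF E[rule_format] this] show "\<exists>p e. p \<in> S \<and> e \<in> regular_normal_cone S p
        \<and> dist p x < 1 / real (Suc n) \<and> dist e (E n) < 1 / real (Suc n)" by blast
  qed
  then obtain p e where pe: "\<forall>n. p n \<in> S \<and> e n \<in> regular_normal_cone S (p n)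
      \<and> dist (p n) x < 1 / real (Suc n) \<and> dist (e n) (E n) < 1 / real (Suc n)"
    by (auto simp only: choice_iff)
  have "(\<lambda>n. p n - x) \<longlonglongrightarrow> 0" "(\<lambda>n. e n - E n) \<longlonglongrightarrow> 0"
    using pe by (auto intro!: LIMSEQ_norm_0 simp: dist_norm)
  then have "p \<longlonglongrightarrow> x" "(\<lambda>n. (e n - E n) + E n) \<longlonglongrightarrow> 0 + l"
    using \<open>E \<longlonglongrightarrow> l\<close> by (auto simp only: LIM_zero_iff intro: tendsto_add)
  then show "l \<in> limiting_normal_cone S x"
    unfolding limiting_normal_cone_def using pe by (intro CollectI exI[of _ p] exI[of _ e]) simp
qed

lemma dir_limiting_normal_cone_subset: "dir_limiting_normal_cone S x v \<subseteq> limiting_normal_cone S x"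
proof
  fix \<eta> assume "\<eta> \<in> dir_limiting_normal_cone S x v"
  then obtain t ws es where "t \<longlonglongrightarrow> 0" "ws \<longlonglongrightarrow> v" "es \<longlonglongrightarrow> \<eta>"
    and "\<forall>k. es k \<in> regular_normal_cone S (x + t k *\<^sub>R ws k)"
    unfolding dir_limiting_normal_cone_def by blast
  moreover have "(\<lambda>k. x + t k *\<^sub>R ws k) \<longlonglongrightarrow> x + 0 *\<^sub>R v"
    using calculation by (intro tendsto_intros)
  ultimately show "\<eta> \<in> limiting_normal_cone S x"
    unfolding limiting_normal_cone_def using regular_normal_cone_imp_mem
    by (intro CollectI exI[of _ "\<lambda>k. x + t k *\<^sub>R ws k"] exI[of _ es]) auto
qed

lemma tangent_cone_at_0_subset_closed_cone:
  assumes "A \<subseteq> C" and "closed C" and "cone C"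
  shows "tangent_cone A 0 \<subseteq> C"
proof
  fix z assume "z \<in> tangent_cone A 0"
  then obtain t ws where "\<And>k. t k > (0::real)" "ws \<longlonglongrightarrow> z" and "\<And>k. t k *\<^sub>R ws k \<in> A"
    unfolding tangent_cone_def by auto
  have "ws k \<in> C" for k
    using \<open>A \<subseteq> C\<close> \<open>t k *\<^sub>R ws k \<in> A\<close> cone_scaleR_cancel[OF \<open>cone C\<close> \<open>t k > 0\<close>] by blast
  then show "z \<in> C" using \<open>closed C\<close> \<open>ws \<longlonglongrightarrow> z\<close> closed_sequentially by blast
qed

section \<open>Sets that coincide locally with a translated cone\<close>

definition local_cone_at :: "'a::real_normed_vector set \<Rightarrow> 'a \<Rightarrow> 'a set \<Rightarrow> bool" where
  "local_cone_at S y K \<longleftrightarrow> (\<forall>\<^sub>F x in nhds y. x \<in> S \<longleftrightarrow> x - y \<in> K)"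

lemma local_cone_atE:
  assumes "local_cone_at S y K"
  obtains e where "e > 0" "\<And>x. dist x y < e \<Longrightarrow> x \<in> S \<longleftrightarrow> x - y \<in> K"
  using assms unfolding local_cone_at_def eventually_nhds_metric by auto

lemma local_cone_at_cong:
  assumes "\<forall>\<^sub>F x in nhds y. x \<in> S \<longleftrightarrow> x \<in> S'" and "local_cone_at S y K"
  shows "local_cone_at S' y K"
  using assms unfolding local_cone_at_def by eventually_elim blast

lemma local_cone_at_Int:
  assumes "local_cone_at S y K" and "local_cone_at T y L"
  shows "local_cone_at (S \<inter> T) y (K \<inter> L)"
  using assms unfolding local_cone_at_def by eventually_elim blast

lemma local_cone_at_Un:
  assumes "local_cone_at S y K" and "local_cone_at T y L"
  shows "local_cone_at (S \<union> T) y (K \<union> L)"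
  using assms unfolding local_cone_at_def by eventually_elim blast

lemma local_cone_at_halfspace_le:
  fixes a y :: "'a::euclidean_space"
  obtains K where "polyhedron K" "cone K" "local_cone_at {x. a \<bullet> x \<le> b} y K"
proof (cases "a \<bullet> y" b rule: linorder_cases)
  case less
  then have "\<forall>\<^sub>F x in nhds y. a \<bullet> x < b"
    using eventually_nhds_in_open[OF open_halfspace_lt, of y a b] by simp
  then have "local_cone_at {x. a \<bullet> x \<le> b} y UNIV"
    unfolding local_cone_at_def by eventually_elim simp
  then show ?thesis using that[of UNIV] by simp
next
  case equal
  then have "local_cone_at {x. a \<bullet> x \<le> b} y {d. a \<bullet> d \<le> 0}"
    unfolding local_cone_at_def by (simp add: inner_diff_right)
  moreover have "cone {d. a \<bullet> d \<le> 0}"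
    by (simp add: cone_def mult_nonneg_nonpos)
  ultimately show ?thesis using that polyhedron_halfspace_le by blast
next
  case greater
  then have "\<forall>\<^sub>F x in nhds y. a \<bullet> x > b"
    using eventually_nhds_in_open[OF open_halfspace_gt, of y b a] by simp
  then have "local_cone_at {x. a \<bullet> x \<le> b} y {}"
    unfolding local_cone_at_def by eventually_elim simp
  then show ?thesis using that[of "{}"] by simp
qed

lemma polyhedron_local_cone_at:
  fixes P :: "'a::euclidean_space set"
  assumes "polyhedron P"
  obtains K where "polyhedron K" "cone K" "local_cone_at P y K"
proof -
  obtain F where "finite F" "P = \<Inter>F" and F: "\<forall>h\<in>F. \<exists>a b. a \<noteq> 0 \<and> h = {x. a \<bullet> x \<le> b}"
    using assms unfolding polyhedron_def by blast
  have "\<exists>K. polyhedron K \<and> cone K \<and> local_cone_at (\<Inter>F) y K"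
    using \<open>finite F\<close> F
  proof (induction F rule: finite_induct)
    case empty
    have "local_cone_at UNIV y UNIV" by (simp add: local_cone_at_def)
    then show ?case by (intro exI[of _ UNIV]) simp
  next
    case (insert h F)
    then obtain a b where h: "h = {x. a \<bullet> x \<le> b}" by blast
    obtain L where "polyhedron L" "cone L" "local_cone_at h y L"
      using local_cone_at_halfspace_le[of a b y] unfolding h by blast
    moreover obtain K where "polyhedron K" "cone K" "local_cone_at (\<Inter>F) y K"
      using insert by blast
    moreover have "cone (L \<inter> K)" using \<open>cone L\<close> \<open>cone K\<close> by (simp add: cone_def)
    ultimately show ?case using local_cone_at_Int polyhedron_Int by (metis Inter_insert)
  qed
  then show ?thesis using that \<open>P = \<Inter>F\<close> by blast
qed

lemma finite_union_of_polyhedra_local_cone_at: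
  fixes S :: "'a::euclidean_space set"
  assumes "(finite union_of polyhedron) S"
  obtains K where "(finite union_of polyhedron) K" "cone K" "local_cone_at S y K"
proof -
  obtain \<P> where "finite \<P>" "\<P> \<subseteq> Collect polyhedron" "S = \<Union>\<P>"
    using assms unfolding union_of_def by blast
  have "\<exists>K. (finite union_of polyhedron) K \<and> cone K \<and> local_cone_at (\<Union>\<P>) y K"
    using \<open>finite \<P>\<close> \<open>\<P> \<subseteq> Collect polyhedron\<close>
  proof (induction \<P> rule: finite_induct)
    case empty
    have "local_cone_at {} y {}" by (simp add: local_cone_at_def)
    then show ?case by (intro exI[of _ "{}"]) simp
  next
    case (insert P \<P>)
    then have "polyhedron P" by simp
    then obtain L where "polyhedron L" "cone L" "local_cone_at P y L"
      using polyhedron_local_cone_at[of P y] by blast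
    moreover obtain K where "(finite union_of polyhedron) K" "cone K" "local_cone_at (\<Union>\<P>) y K"
      using insert by auto
    moreover have "cone (L \<union> K)" using \<open>cone L\<close> \<open>cone K\<close> unfolding cone_def by blast
    moreover have "(finite union_of polyhedron) (L \<union> K)"
      using \<open>polyhedron L\<close> \<open>(finite union_of polyhedron) K\<close> by (blast intro: finite_union_of_Un finite_union_of_inc)
    ultimately show ?case
      using local_cone_at_Un[of P y L "\<Union>\<P>" K] by auto
  qed
  then show ?thesis using that \<open>S = \<Union>\<P>\<close> by blast
qed

lemma locally_polyhedral_local_cone_at:
  assumes "locally_polyhedral D y"
  obtains K where "(finite union_of polyhedron) K" "cone K" "local_cone_at D y K"
proof -
  obtain a b \<P> where "y \<in> box a b" "finite \<P>" "\<forall>P\<in>\<P>. polyhedron P" and D: "D \<inter> cbox a b = \<Union>\<P>"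
    using assms unfolding locally_polyhedral_def by blast
  then have "(finite union_of polyhedron) (\<Union>\<P>)"
    by (auto simp: union_of_def)
  then obtain K where K: "(finite union_of polyhedron) K" "cone K" "local_cone_at (\<Union>\<P>) y K"
    using finite_union_of_polyhedra_local_cone_at by blast
  have "\<forall>\<^sub>F x in nhds y. x \<in> box a b"
    by (rule eventually_nhds_in_open[OF open_box \<open>y \<in> box a b\<close>])
  then have "\<forall>\<^sub>F x in nhds y. x \<in> \<Union>\<P> \<longleftrightarrow> x \<in> D"
  proof eventually_elim
    case (elim x)
    then show ?case using D box_subset_cbox by blast
  qed
  with K show ?thesis using that local_cone_at_cong by blast
qed

lemma closed_finite_union_of_polyhedra:
  fixes K :: "'a::euclidean_space set"
  assumes "(finite union_of polyhedron) K"
  shows "closed K"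
proof -
  obtain \<P> where "finite \<P>" "\<P> \<subseteq> Collect polyhedron" "\<Union>\<P> = K"
    using assms unfolding union_of_def by blast
  have "closed (\<Union>\<P>)"
    using \<open>finite \<P>\<close> by (rule closed_Union) (use \<open>\<P> \<subseteq> Collect polyhedron\<close> polyhedron_imp_closed in auto)
  then show ?thesis using \<open>\<Union>\<P> = K\<close> by simp
qed

lemma tangent_cone_local_cone_at:
  fixes S K :: "'a::real_normed_vector set"
  assumes "local_cone_at S y K" and "closed K" and "cone K"
  shows "tangent_cone S y = K"
proof -
  obtain e where "e > 0" and near: "\<And>x. dist x y < e \<Longrightarrow> x \<in> S \<longleftrightarrow> x - y \<in> K"
    using local_cone_atE[OF assms(1)] by metis
  show ?thesis
  proof (intro set_eqI iffI)
    fix w assume "w \<in> tangent_cone S y"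
    then obtain t ws where t: "\<And>k. t k > (0::real)" "t \<longlonglongrightarrow> 0" and "ws \<longlonglongrightarrow> w"
      and in_S: "\<And>k. y + t k *\<^sub>R ws k \<in> S"
      unfolding tangent_cone_def by blast
    have "(\<lambda>k. t k *\<^sub>R ws k) \<longlonglongrightarrow> 0 *\<^sub>R w" by (intro tendsto_scaleR t(2) \<open>ws \<longlonglongrightarrow> w\<close>)
    then have "(\<lambda>k. norm (t k *\<^sub>R ws k)) \<longlonglongrightarrow> 0" by (intro tendsto_norm_zero) simp
    then have "\<forall>\<^sub>F k in sequentially. norm (t k *\<^sub>R ws k) < e" using \<open>e > 0\<close> by (rule order_tendstoD(2))
    then have "\<forall>\<^sub>F k in sequentially. ws k \<in> K"
    proof eventually_elim
      case (elim k)
      then have "t k *\<^sub>R ws k \<in> K" using near[of "y + t k *\<^sub>R ws k"] in_S by (simp add: dist_norm)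
      then show ?case using cone_scaleR_cancel[OF \<open>cone K\<close> t(1)] by blast
    qed
    then show "w \<in> K" using Lim_in_closed_set[OF \<open>closed K\<close> _ _ \<open>ws \<longlonglongrightarrow> w\<close>] by simp
  next
    fix w assume "w \<in> K"
    obtain t where t: "\<And>k. t k > 0" "\<And>k. t k * norm w < e" "t \<longlonglongrightarrow> 0"
      using vanishing_scales[OF \<open>e > 0\<close>, of "\<lambda>k. w"] by metis
    have "y + t k *\<^sub>R w \<in> S" for k
    proof -
      have "t k *\<^sub>R w \<in> K" using \<open>cone K\<close> \<open>w \<in> K\<close> t(1)[of k] unfolding cone_def by simp
      moreover have "dist (y + t k *\<^sub>R w) y < e" using t(1,2)[of k] by (simp add: dist_norm)
      ultimately show ?thesis using near by simp
    qed
    then show "w \<in> tangent_cone S y"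
      unfolding tangent_cone_def using t by (intro CollectI exI[of _ t] exI[of _ "\<lambda>k. w"]) auto
  qed
qed

lemma local_cone_at_regular_normal:
  assumes "local_cone_at S y K" and "cone K"
  obtains e where "e > 0"
    "\<And>p \<eta> t. \<eta> \<in> regular_normal_cone K p \<Longrightarrow> t > 0 \<Longrightarrow> t * norm p < e
       \<Longrightarrow> \<eta> \<in> regular_normal_cone S (y + t *\<^sub>R p)"
proof -
  obtain e where "e > 0" and near: "\<And>x. dist x y < e \<Longrightarrow> x \<in> S \<longleftrightarrow> x - y \<in> K"
    using local_cone_atE[OF assms(1)] by metis
  have "\<eta> \<in> regular_normal_cone S (y + t *\<^sub>R p)"
    if "\<eta> \<in> regular_normal_cone K p" "t > 0" "t * norm p < e" for p \<eta> t
  proof (rule regular_normal_cone_local)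
    have "\<eta> \<in> regular_normal_cone K (t *\<^sub>R p)"
      using \<open>cone K\<close> that(2,1) by (rule regular_normal_cone_scaleR_point)
    then show "\<eta> \<in> regular_normal_cone {x. x - y \<in> K} (y + t *\<^sub>R p)"
      by (rule regular_normal_cone_translation)
    have "y + t *\<^sub>R p \<in> ball y e" using that(2,3) by (simp add: dist_norm)
    then have "\<forall>\<^sub>F x in nhds (y + t *\<^sub>R p). x \<in> ball y e" by (rule eventually_nhds_in_open[OF open_ball])
    then show "\<forall>\<^sub>F x in nhds (y + t *\<^sub>R p). x \<in> {x. x - y \<in> K} \<longleftrightarrow> x \<in> S"
      by (rule eventually_mono) (simp add: near dist_commute)
  qed
  with \<open>e > 0\<close> show ?thesis by (rule that)
qed

section \<open>Iterated tangent cones of locally polyhedral sets\<close>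

lemma limiting_normal_cone_subset_dir_limiting_normal_cone:
  assumes "local_cone_at D y K" "cone K" and "local_cone_at K v K'" "cone K'"
  shows "limiting_normal_cone K' w \<subseteq> dir_limiting_normal_cone D y v"
proof
  fix \<eta> assume "\<eta> \<in> limiting_normal_cone K' w"
  then obtain xs es where "es \<longlonglongrightarrow> \<eta>" and normal: "\<And>k. es k \<in> regular_normal_cone K' (xs k)"
    unfolding limiting_normal_cone_def by auto
  obtain d where "d > 0" and lift_K: "\<And>p \<eta> \<tau>. \<eta> \<in> regular_normal_cone K' p \<Longrightarrow> \<tau> > 0
      \<Longrightarrow> \<tau> * norm p < d \<Longrightarrow> \<eta> \<in> regular_normal_cone K (v + \<tau> *\<^sub>R p)"
    using local_cone_at_regular_normal[OF assms(3,4)] by metis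
  obtain e where "e > 0" and lift_D: "\<And>p \<eta> t. \<eta> \<in> regular_normal_cone K p \<Longrightarrow> t > 0
      \<Longrightarrow> t * norm p < e \<Longrightarrow> \<eta> \<in> regular_normal_cone D (y + t *\<^sub>R p)"
    using local_cone_at_regular_normal[OF assms(1,2)] by metis
  obtain \<tau> where \<tau>: "\<And>k. \<tau> k > 0" "\<And>k. \<tau> k * norm (xs k) < d" "(\<lambda>k. \<tau> k *\<^sub>R xs k) \<longlonglongrightarrow> 0"
    using vanishing_scales[OF \<open>d > 0\<close>, of xs] by metis
  \<comment> \<open>the base points \<open>xs k\<close> need not converge: the scales \<open>\<tau> k\<close> push them to \<open>v\<close> anyway\<close>
  define ws where "ws = (\<lambda>k. v + \<tau> k *\<^sub>R xs k)"
  obtain t where t: "\<And>k. t k > 0" "\<And>k. t k * norm (ws k) < e" "t \<longlonglongrightarrow> 0"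
    using vanishing_scales[OF \<open>e > 0\<close>, of ws] by metis
  have "ws \<longlonglongrightarrow> v"
    using tendsto_add[OF tendsto_const \<tau>(3), of v] by (simp add: ws_def)
  moreover have "es k \<in> regular_normal_cone D (y + t k *\<^sub>R ws k)" for k
    unfolding ws_def by (rule lift_D[OF lift_K[OF normal \<tau>(1,2)] t(1,2)[unfolded ws_def]])
  ultimately show "\<eta> \<in> dir_limiting_normal_cone D y v"
    unfolding dir_limiting_normal_cone_def using t \<open>es \<longlonglongrightarrow> \<eta>\<close>
    by (intro CollectI exI[of _ t] exI[of _ ws] exI[of _ es]) auto
qed

lemma locally_polyhedral_iterated_tangent_cone:
  fixes D :: "'a::euclidean_space set"
  assumes "locally_polyhedral D y"
  shows "cone (tangent_cone (tangent_cone D y) v)"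
    and "limiting_normal_cone (tangent_cone (tangent_cone D y) v) w \<subseteq> dir_limiting_normal_cone D y v"
proof -
  obtain K where K: "(finite union_of polyhedron) K" "cone K" "local_cone_at D y K"
    using locally_polyhedral_local_cone_at[OF assms] by metis
  obtain K' where K': "(finite union_of polyhedron) K'" "cone K'" "local_cone_at K v K'"
    using finite_union_of_polyhedra_local_cone_at[OF K(1)] by metis
  have "tangent_cone D y = K"
    using K(3) closed_finite_union_of_polyhedra[OF K(1)] K(2) by (rule tangent_cone_local_cone_at)
  moreover have "tangent_cone K v = K'"
    using K'(3) closed_finite_union_of_polyhedra[OF K'(1)] K'(2) by (rule tangent_cone_local_cone_at)
  ultimately show "cone (tangent_cone (tangent_cone D y) v)"
    and "limiting_normal_cone (tangent_cone (tangent_cone D y) v) w \<subseteq> dir_limiting_normal_cone D y v"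
    using K'(2) limiting_normal_cone_subset_dir_limiting_normal_cone[OF K(3,2) K'(3,2)] by simp_all
qed

lemma lag_hess_form_nonneg_if_normal:
  fixes A :: "'a::euclidean_space \<Rightarrow> 'b::euclidean_space"
  assumes "linear A" and "cone T"
    and "y \<in> limiting_normal_cone T (w_s A D2 s u (\<alpha> *\<^sub>R y))"
    and "adjoint A y = 0" and "\<alpha> \<ge> 0"
  shows "lag_hess_form D2 y u \<ge> 0"
proof -
  have "y \<bullet> A s = 0"
    using adjoint_works[OF assms(1), of s y] assms(4) by (simp add: inner_commute)
  moreover have "y \<bullet> w_s A D2 s u (\<alpha> *\<^sub>R y) = 0"
    using assms(2,3) by (rule limiting_normal_cone_cone_orthogonal)
  ultimately have "lag_hess_form D2 y u = 2 * \<alpha> * (y \<bullet> y)"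
    unfolding w_s_def lag_hess_form_def by (simp add: inner_diff_right inner_add_right)
  then show ?thesis using \<open>\<alpha> \<ge> 0\<close> by simp
qed

theorem proposition5p22:
  fixes g :: "'a::euclidean_space \<Rightarrow> real ^ 'm"
    and Dg :: "'a \<Rightarrow> 'a \<Rightarrow> real ^ 'm"
    and D2g :: "'a \<Rightarrow> 'a \<Rightarrow> 'a \<Rightarrow> real ^ 'm"
    and D :: "(real ^ 'm) set"
    and xbar u :: 'a
  assumes deriv1: "\<And>x. (g has_derivative Dg x) (at x)"
    and deriv2: "\<And>x h. ((\<lambda>x. Dg x h) has_derivative D2g x h) (at x)"
    and cont2: "\<And>h k. continuous_on UNIV (\<lambda>x. D2g x h k)"
    and closedD: "closed D"
    and polyD: "locally_polyhedral D (g xbar)"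
    and feas: "g xbar \<in> D"
    and unit: "norm u = 1"
    and SOSCMS: "\<And>y. adjoint (Dg xbar) y = 0 \<Longrightarrow> lag_hess_form (D2g xbar) y u \<ge> 0 \<Longrightarrow>
                   y \<in> dir_limiting_normal_cone D (g xbar) (Dg xbar u) \<Longrightarrow> y = 0"
  defines "TT \<equiv> tangent_cone (tangent_cone D (g xbar)) (Dg xbar u)"
  shows
    "(\<forall>s y z. adjoint (Dg xbar) y = 0
        \<and> lag_hess_apply (D2g xbar) y u + adjoint (Dg xbar) z = 0
        \<and> y \<in> limiting_normal_cone TT (w_s (Dg xbar) (D2g xbar) s u 0)
        \<and> (z \<in> limiting_normal_cone TT (w_s (Dg xbar) (D2g xbar) s u 0)
           \<or> z \<in> tangent_cone (limiting_normal_cone TT (w_s (Dg xbar) (D2g xbar) s u 0)) y)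
        \<longrightarrow> y = 0)
   \<and> (\<forall>xs s y z (\<alpha>::real). \<alpha> \<ge> 0
        \<and> xs = lag_hess_apply (D2g xbar) y u + adjoint (Dg xbar) z
        \<and> y \<in> limiting_normal_cone TT (w_s (Dg xbar) (D2g xbar) s u (\<alpha> *\<^sub>R y))
        \<and> adjoint (Dg xbar) y = 0
        \<and> (z \<in> limiting_normal_cone TT (w_s (Dg xbar) (D2g xbar) s u (\<alpha> *\<^sub>R y))
           \<or> z \<in> tangent_cone (limiting_normal_cone TT (w_s (Dg xbar) (D2g xbar) s u (\<alpha> *\<^sub>R y))) y)
        \<longrightarrow> (\<exists>lam\<in>limiting_normal_cone D (g xbar). xs = adjoint (Dg xbar) lam))"
proof -
  have lin_Dg: "linear (Dg xbar)" using deriv1 by (rule has_derivative_linear)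
  have lin_D2g: "linear (D2g xbar u)" using deriv2 by (rule has_derivative_linear)
  have cone_TT: "cone TT"
    and TT_normals: "\<And>w. limiting_normal_cone TT w \<subseteq> dir_limiting_normal_cone D (g xbar) (Dg xbar u)"
    unfolding TT_def using locally_polyhedral_iterated_tangent_cone[OF polyD] by blast+
  have multiplier_zero: "y = 0"
    if "y \<in> limiting_normal_cone TT (w_s (Dg xbar) (D2g xbar) s u (\<alpha> *\<^sub>R y))"
      and "adjoint (Dg xbar) y = 0" and "\<alpha> \<ge> 0" for y s \<alpha>
    using SOSCMS lag_hess_form_nonneg_if_normal[OF lin_Dg cone_TT that] TT_normals that by blast
  have hess_zero: "lag_hess_apply (D2g xbar) 0 u = 0"
    unfolding lag_hess_apply_def using adjoint_linear[OF lin_D2g] by (rule linear_0)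
  have TT_normal_in_D: "z \<in> limiting_normal_cone D (g xbar)"
    if "z \<in> limiting_normal_cone TT w \<or> z \<in> tangent_cone (limiting_normal_cone TT w) 0" for z w
  proof -
    have "limiting_normal_cone TT w \<subseteq> limiting_normal_cone D (g xbar)"
      using TT_normals dir_limiting_normal_cone_subset by blast
    with tangent_cone_at_0_subset_closed_cone[OF this closed_limiting_normal_cone cone_limiting_normal_cone]
    show ?thesis using that by blast
  qed
  show ?thesis
  proof (intro conjI allI impI; elim conjE)
    show "y = 0" if "adjoint (Dg xbar) y = 0"
      and "y \<in> limiting_normal_cone TT (w_s (Dg xbar) (D2g xbar) s u 0)" for s y
      using multiplier_zero[of y s 0] that by simp
  next
    fix xs s y z and \<alpha> :: real
    assume "\<alpha> \<ge> 0" and xs: "xs = lag_hess_apply (D2g xbar) y u + adjoint (Dg xbar) z"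
      and y: "y \<in> limiting_normal_cone TT (w_s (Dg xbar) (D2g xbar) s u (\<alpha> *\<^sub>R y))"
      and "adjoint (Dg xbar) y = 0"
      and z: "z \<in> limiting_normal_cone TT (w_s (Dg xbar) (D2g xbar) s u (\<alpha> *\<^sub>R y))
        \<or> z \<in> tangent_cone (limiting_normal_cone TT (w_s (Dg xbar) (D2g xbar) s u (\<alpha> *\<^sub>R y))) y"
    have "y = 0" using multiplier_zero y \<open>adjoint (Dg xbar) y = 0\<close> \<open>\<alpha> \<ge> 0\<close> .
    then show "\<exists>lam\<in>limiting_normal_cone D (g xbar). xs = adjoint (Dg xbar) lam"
      using xs z hess_zero TT_normal_in_D by auto
  qed
qed

end
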